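(* Let $\mu \in \mathbb{R}$, $\sigma > 0$, $t \in \mathbb{R}$ and $y \in \mathbb{R}$, and let $\Phi_{\mu,\sigma^2}$ denote the CDF of the Gaussian distribution $\mathcal{N}(\mu,\sigma^2)$. (i) For the weighting measure $\gamma_1$ with $\mathrm{d}\gamma_1(u) = \mathbb{1}\{t \leq u\}\,\mathrm{d}\lambda(u)$, $$\mathrm{CRPS}_{\gamma_1}(\Phi_{\mu,\sigma^2}, y) = \sigma\left[ -\tilde t\, \Phi(\tilde t)^2 + \tilde y^{t}\left(2\Phi(\tilde y^{t}) - 1\right) + \left(2\phi(\tilde y^{t}) - 2\phi(\tilde t)\Phi(\tilde t)\right) - \frac{1}{\sqrt{\pi}}\left(1 - \Phi(\tilde t\sqrt{2})\right)\right],$$ where $\tilde t = (t-\mu)/\sigma$ and $\tilde y^{t} = (\max(y,t) - \mu)/\sigma$. (ii) For $\sigma_\gamma > 0$ and the weighting measure $\gamma_2$ with $\mathrm{d}\gamma_2(u) = \frac{1}{\sigma_\gamma}\phi\!\left(\frac{u-t}{\sigma_\gamma}\right)\mathrm{d}\lambda(u)$, $$\mathrm{CRPS}_{\gamma_2}(\Phi_{\mu,\sigma^2}, y) = \Phi\!\left(\begin{pmatrix}0\\0\end{pmatrix}; \begin{pmatrix}\mu - t\\ \mu - t\end{pmatrix}, \begin{pmatrix}\sigma_\gamma^2 + \sigma^2 & \sigma_\gamma^2\\ \sigma_\gamma^2 & \sigma_\gamma^2+\sigma^2\end{pmatrix}\right) - 2\,\Phi\!\left(\begin{pmatrix}0\\0\end{pmatrix};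 \begin{pmatrix}\mu - t\\ y - t\end{pmatrix}, \begin{pmatrix}\sigma_\gamma^2 + \sigma^2 & \sigma_\gamma^2\\ \sigma_\gamma^2 & \sigma_\gamma^2\end{pmatrix}\right) + \Phi\!\left(\frac{t-y}{\sigma_\gamma}\right).$$
   Context: $\lambda$ is Lebesgue measure on $\mathbb{R}$; $\phi(v) = \frac{1}{\sqrt{2\pi}}e^{-v^2/2}$ and $\Phi$ are the standard normal density and CDF; $\Phi(\cdot;\boldsymbol{\mu},\boldsymbol{\Sigma})$ denotes the CDF of the bivariate Gaussian distribution with mean $\boldsymbol{\mu}\in\mathbb{R}^2$ and covariance $\boldsymbol{\Sigma}\in\mathbb{R}^{2\times 2}$ (evaluated at the given point). For a CDF $F$ on $\mathbb{R}$, a Borel measure $\gamma$ on $\mathbb{R}$, and $y\in\mathbb{R}$, the threshold-weighted CRPS is $\mathrm{CRPS}_\gamma(F,y) = \int_{-\infty}^{\infty}\left[F(u) - \mathbb{1}\{y\leq u\}\right]^2\,\mathrm{d}\gamma(u)$. *)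

theory Defs
  imports "HOL-Probability.Probability"
begin

definition gauss_cdf :: "real \<Rightarrow> real \<Rightarrow> real \<Rightarrow> real" where
  "gauss_cdf m s x = measure (density lborel (normal_density m s)) {..x}"

definition std_normal_cdf :: "real \<Rightarrow> real" where
  "std_normal_cdf x = measure (density lborel std_normal_density) {..x}"

definition bivariate_normal_density ::
    "real \<times> real \<Rightarrow> real \<times> real \<times> real \<Rightarrow> real \<times> real \<Rightarrow> real" where
  "bivariate_normal_density m S x =
     (let (m1, m2) = m; (s11, s12, s22) = S; (x1, x2) = x;
          d = s11 * s22 - s12^2;
          z1 = x1 - m1; z2 = x2 - m2;
          q = (s22 * z1^2 - 2 * s12 * z1 * z2 + s11 * z2^2) / d
      in exp (- q / 2) / (2 * pi * sqrt d))"

definition bivariate_normal_cdf ::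
    "real \<times> real \<Rightarrow> real \<times> real \<Rightarrow> real \<times> real \<times> real \<Rightarrow> real" where
  "bivariate_normal_cdf x m S =
     measure (density (lborel \<Otimes>\<^sub>M lborel) (bivariate_normal_density m S))
             ({..fst x} \<times> {..snd x})"

definition crps :: "real measure \<Rightarrow> (real \<Rightarrow> real) \<Rightarrow> real \<Rightarrow> real" where
  "crps \<gamma> F y = (\<integral>u. (F u - indicator {y..} u)^2 \<partial>\<gamma>)"

end

(* (i) Writing z(u) = (u - mu)/sigma, the integrand on [t, oo) is Phi(z)^2 below max(y, t) and
   (1 - Phi(z))^2 = Phi(-z)^2 above it. Both are integrated in closed form with the antiderivative
   H(z) = z Phi(z)^2 + 2 phi(z) Phi(z) - Phi(z sqrt 2)/sqrt pi of Phi^2, which vanishes at -oo by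
   Mills' inequality; the score is sigma (H(z(max y t)) + H(-z(max y t)) - H(z(t))).
   (ii) Expanding the square, the score is E[F(V)^2] - 2 E[F(V) 1{y <= V}] + P(y <= V) for
   F = Phi_{mu,sigma^2} and V ~ N(t, sigma_gamma^2). If X1, X2 ~ N(mu, sigma^2) are independent of
   V, then F(V)^2 is the conditional probability of X1 <= V and X2 <= V, so the first two terms
   are the probabilities that the Gaussian vectors (X1 - V, X2 - V) and (X1 - V, y - V) lie in
   the negative quadrant. *)
theory Submission
  imports Defs "HOL-Real_Asymp.Real_Asymp"
begin

lemma std_normal_cdf_eq_cdf: "std_normal_cdf = cdf (density lborel std_normal_density)"
  by (simp add: fun_eq_iff std_normal_cdf_def cdf_def)

lemma std_normal_cdf_nonneg: "0 \<le> std_normal_cdf x"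
  unfolding std_normal_cdf_def by simp

lemma std_normal_cdf_le_1: "std_normal_cdf x \<le> 1"
  unfolding std_normal_cdf_eq_cdf by (rule real_distribution.cdf_bounded_prob[OF real_dist_normal_dist])

lemma std_normal_cdf_at_bot: "(std_normal_cdf \<longlongrightarrow> 0) at_bot"
  unfolding std_normal_cdf_eq_cdf
  by (rule finite_borel_measure.cdf_lim_at_bot[OF real_distribution.finite_borel_measure_M])
     (rule real_dist_normal_dist)

lemma std_normal_cdf_at_top: "(std_normal_cdf \<longlongrightarrow> 1) at_top"
  unfolding std_normal_cdf_eq_cdf by (rule real_distribution.cdf_lim_at_top_prob[OF real_dist_normal_dist])

lemma normal_density_standardize:
  "s > 0 \<Longrightarrow> s * normal_density m s (m + s * x) = std_normal_density x"
  unfolding normal_density_def by (simp add: real_sqrt_mult power_mult_distrib)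

lemma nn_integral_normal_density_atMost:
  assumes "s > 0"
  shows "(\<integral>\<^sup>+z. ennreal (normal_density m s z) * indicator {..c} z \<partial>lborel)
           = ennreal (std_normal_cdf ((c - m) / s))"
proof -
  interpret std: prob_space "density lborel std_normal_density"
    by (rule prob_space_normal_density) simp
  have "(\<integral>\<^sup>+z. ennreal (normal_density m s z) * indicator {..c} z \<partial>lborel)
      = ennreal s * (\<integral>\<^sup>+x. ennreal (normal_density m s (m + s * x)) * indicator {..c} (m + s * x) \<partial>lborel)"
    using assms by (subst nn_integral_real_affine[where c = s and t = m]) auto
  also have "\<dots> = (\<integral>\<^sup>+x. ennreal (std_normal_density x) * indicator {..(c - m) / s} x \<partial>lborel)"
  proof (subst nn_integral_cmult[symmetric], simp, rule nn_integral_cong)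
    fix x
    have "m + s * x \<le> c \<longleftrightarrow> x \<le> (c - m) / s"
      using assms by (simp add: field_simps)
    then show "ennreal s * (ennreal (normal_density m s (m + s * x)) * indicator {..c} (m + s * x))
        = ennreal (std_normal_density x) * indicator {..(c - m) / s} x"
      using assms normal_density_standardize[OF assms, of m x]
      by (simp add: ennreal_mult'[symmetric] indicator_def)
  qed
  also have "\<dots> = emeasure (density lborel std_normal_density) {..(c - m) / s}"
    by (rule emeasure_density[symmetric]) auto
  also have "\<dots> = ennreal (std_normal_cdf ((c - m) / s))"
    unfolding std_normal_cdf_def
    by (rule std.emeasure_eq_measure)
  finally show ?thesis .
qed

lemma gauss_cdf_eq_std_normal_cdf:
  assumes "s > 0"
  shows "gauss_cdf m s = (\<lambda>x. std_normal_cdf ((x - m) / s))"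
proof
  fix x
  interpret prob_space "density lborel (normal_density m s)"
    using assms by (rule prob_space_normal_density)
  have "ennreal (gauss_cdf m s x) = ennreal (std_normal_cdf ((x - m) / s))"
    unfolding gauss_cdf_def emeasure_eq_measure[symmetric]
      nn_integral_normal_density_atMost[OF assms, symmetric]
    by (rule emeasure_density) auto
  then show "gauss_cdf m s x = std_normal_cdf ((x - m) / s)"
    by (simp add: std_normal_cdf_nonneg gauss_cdf_def)
qed

lemma continuous_on_std_normal_density: "continuous_on S std_normal_density"
  unfolding std_normal_density_def by (intro continuous_intros) auto

lemma std_normal_cdf_diff:
  assumes "a < b"
  shows "std_normal_cdf b - std_normal_cdf a = integral {a..b} std_normal_density"
proof -
  interpret real_distribution std_normal_distribution
    by (rule real_dist_normal_dist)
  have "std_normal_cdf b - std_normal_cdf a = measure std_normal_distribution {a<..b}"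
    unfolding std_normal_cdf_eq_cdf by (rule cdf_diff_eq[OF assms])
  also have "\<dots> = measure std_normal_distribution {a..b}"
  proof -
    have "emeasure std_normal_distribution {a<..b} = emeasure std_normal_distribution {a..b}"
      using AE_lborel_singleton[of a]
      by (simp add: emeasure_density) (auto intro!: nn_integral_cong_AE split: split_indicator)
    then show ?thesis by (simp add: measure_def)
  qed
  also have "\<dots> = integral {a..b} std_normal_density"
  proof -
    have "emeasure std_normal_distribution {a..b} = ennreal (integral {a..b} std_normal_density)"
      by (simp add: emeasure_density, rule nn_integral_has_integral_lebesgue')
         (auto intro!: integrable_integral integrable_continuous_interval
               continuous_on_std_normal_density)
    moreover have "0 \<le> integral {a..b} std_normal_density"
      by (intro integral_nonneg integrable_continuous_interval continuous_on_std_normal_density) simp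
    ultimately show ?thesis
      by (simp add: measure_def)
  qed
  finally show ?thesis .
qed

lemma DERIV_std_normal_cdf: "(std_normal_cdf has_real_derivative std_normal_density x) (at x)"
proof -
  have "((\<lambda>u. std_normal_cdf (x - 1) + integral {x - 1..u} std_normal_density)
          has_real_derivative std_normal_density x) (at x within {x - 1..x + 1})"
    by (auto intro!: derivative_eq_intros integral_has_real_derivative
             continuous_on_std_normal_density)
  then have "((\<lambda>u. std_normal_cdf (x - 1) + integral {x - 1..u} std_normal_density)
          has_real_derivative std_normal_density x) (at x)"
    by (simp add: at_within_Icc_at)
  then show ?thesis
    by (rule has_field_derivative_transform_within_open[where S = "{x - 1<..<x + 1}"])
       (auto simp flip: std_normal_cdf_diff)
qed

lemmas DERIV_std_normal_cdf_chain [derivative_intros] = DERIV_chain2[OF DERIV_std_normal_cdf]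

lemma DERIV_std_normal_density: "(std_normal_density has_real_derivative - x * std_normal_density x) (at x)"
  unfolding std_normal_density_def by (auto intro!: derivative_eq_intros simp: field_simps)

lemmas DERIV_std_normal_density_chain [derivative_intros] = DERIV_chain2[OF DERIV_std_normal_density]

lemma isCont_std_normal_cdf: "isCont std_normal_cdf x"
  using DERIV_std_normal_cdf by (rule DERIV_isCont)

lemma borel_measurable_std_normal_cdf [measurable]: "std_normal_cdf \<in> borel_measurable borel"
  by (intro borel_measurable_continuous_onI continuous_at_imp_continuous_on ballI isCont_std_normal_cdf)

lemma std_normal_density_minus [simp]: "std_normal_density (- x) = std_normal_density x"
  by (simp add: std_normal_density_def)

lemma std_normal_cdf_minus: "std_normal_cdf (- x) = 1 - std_normal_cdf x"
proof -
  define h where "h u = std_normal_cdf (- u) + std_normal_cdf u" for u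
  have "(h has_real_derivative 0) (at u)" for u
    unfolding h_def by (auto intro!: derivative_eq_intros)
  then have const: "h = (\<lambda>_. h x)"
    using DERIV_isconst_all by blast
  have "(h \<longlongrightarrow> 0 + 1) at_top"
    unfolding h_def
    by (intro tendsto_add std_normal_cdf_at_top filterlim_compose[OF std_normal_cdf_at_bot]
              filterlim_uminus_at_bot_at_top)
  then have "h x = 1"
    by (subst (asm) const) (simp add: tendsto_const_iff)
  then show ?thesis
    unfolding h_def by simp
qed

text \<open>Mills' inequality: \<open>-\<phi>(z)/z - \<Phi>(z)\<close> has derivative \<open>\<phi>(z)/z\<^sup>2 \<ge> 0\<close> and
  vanishes at \<open>-\<infinity>\<close>.\<close>
lemma std_normal_cdf_mills:
  assumes "z < 0"
  shows "- z * std_normal_cdf z \<le> std_normal_density z"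
proof -
  define D where "D u = - std_normal_density u / u - std_normal_cdf u" for u
  have deriv: "(D has_real_derivative std_normal_density u / u\<^sup>2) (at u)" if "u < 0" for u
    unfolding D_def using that
    by (auto intro!: derivative_eq_intros simp: field_simps power2_eq_square)
  have mono: "D w \<le> D z" if "w \<le> z" for w
  proof (rule DERIV_nonneg_imp_nondecreasing[OF that])
    fix u assume "w \<le> u" "u \<le> z"
    then show "\<exists>d. (D has_real_derivative d) (at u) \<and> 0 \<le> d"
      using assms by (intro exI[of _ "std_normal_density u / u\<^sup>2"] conjI deriv) auto
  qed
  have "(D \<longlongrightarrow> - 0 - 0) at_bot"
    unfolding D_def
    by (intro tendsto_diff std_normal_cdf_at_bot) (unfold std_normal_density_def, real_asymp)
  then have "0 \<le> D z"
    by (intro tendsto_upperbound[where F = at_bot]) (auto simp: eventually_at_bot_linorder intro!: exI mono)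
  then show ?thesis
    using assms unfolding D_def by (simp add: field_simps)
qed

text \<open>The first two terms differentiate to \<open>\<Phi>\<^sup>2 + 2\<phi>\<^sup>2\<close>, and \<open>2\<phi>(z)\<^sup>2\<close> is the
  derivative of \<open>\<Phi>(z\<surd>2)/\<surd>\<pi>\<close>.\<close>
definition std_normal_cdf_sq_antideriv :: "real \<Rightarrow> real" where
  "std_normal_cdf_sq_antideriv z =
     z * (std_normal_cdf z)\<^sup>2 + 2 * std_normal_density z * std_normal_cdf z
     - std_normal_cdf (z * sqrt 2) / sqrt pi"

lemma std_normal_density_sq:
  "2 * (std_normal_density z)\<^sup>2 = sqrt 2 / sqrt pi * std_normal_density (z * sqrt 2)"
proof -
  have "2 * (std_normal_density z)\<^sup>2 = exp (- z\<^sup>2) / pi"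
    by (simp add: std_normal_density_def power_mult_distrib power_divide
                  exp_double[symmetric] real_sqrt_mult)
  also have "\<dots> = sqrt 2 / sqrt pi * std_normal_density (z * sqrt 2)"
    by (simp add: std_normal_density_def power_mult_distrib real_sqrt_mult field_simps)
  finally show ?thesis .
qed

lemma DERIV_std_normal_cdf_sq_antideriv:
  "(std_normal_cdf_sq_antideriv has_real_derivative (std_normal_cdf z)\<^sup>2) (at z)"
proof -
  have "(std_normal_cdf_sq_antideriv has_real_derivative
          (std_normal_cdf z)\<^sup>2 + 2 * (std_normal_density z)\<^sup>2
          - sqrt 2 / sqrt pi * std_normal_density (z * sqrt 2)) (at z)"
    unfolding std_normal_cdf_sq_antideriv_def [abs_def]
    by (rule derivative_eq_intros refl | simp)+
       (simp add: field_simps power2_eq_square real_sqrt_mult[symmetric])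
  then show ?thesis
    by (simp add: std_normal_density_sq)
qed

lemmas DERIV_std_normal_cdf_sq_antideriv_chain [derivative_intros] =
  DERIV_chain2[OF DERIV_std_normal_cdf_sq_antideriv]

lemma std_normal_density_at_bot: "(std_normal_density \<longlongrightarrow> 0) at_bot"
  unfolding std_normal_density_def by real_asymp

lemma std_normal_cdf_sq_antideriv_at_bot: "(std_normal_cdf_sq_antideriv \<longlongrightarrow> 0) at_bot"
proof -
  have "((\<lambda>z. z * (std_normal_cdf z)\<^sup>2) \<longlongrightarrow> 0) at_bot"
  proof (rule tendsto_sandwich[of "\<lambda>z. - (std_normal_density z * std_normal_cdf z)" _ _ "\<lambda>_. 0"])
    have "- (std_normal_density z * std_normal_cdf z) \<le> z * (std_normal_cdf z)\<^sup>2" if "z < 0" for z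
      using mult_right_mono[OF std_normal_cdf_mills[OF that] std_normal_cdf_nonneg[of z]]
      by (simp add: power2_eq_square)
    then show "\<forall>\<^sub>F z in at_bot. - (std_normal_density z * std_normal_cdf z) \<le> z * (std_normal_cdf z)\<^sup>2"
      by (auto simp: eventually_at_bot_linorder intro!: exI[of _ "-1"])
    show "\<forall>\<^sub>F z in at_bot. z * (std_normal_cdf z)\<^sup>2 \<le> 0"
      by (auto simp: eventually_at_bot_linorder mult_nonpos_nonneg intro!: exI[of _ 0])
    show "((\<lambda>z. - (std_normal_density z * std_normal_cdf z)) \<longlongrightarrow> 0) at_bot"
      using tendsto_minus[OF tendsto_mult[OF std_normal_density_at_bot std_normal_cdf_at_bot]] by simp
  qed simp
  moreover have "((\<lambda>z. std_normal_cdf (z * sqrt 2)) \<longlongrightarrow> 0) at_bot"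
    by (rule filterlim_compose[OF std_normal_cdf_at_bot]) real_asymp
  ultimately have "(std_normal_cdf_sq_antideriv \<longlongrightarrow> 0 + 2 * 0 * 0 - 0 / sqrt pi) at_bot"
    unfolding std_normal_cdf_sq_antideriv_def [abs_def]
    by (intro tendsto_intros std_normal_density_at_bot std_normal_cdf_at_bot) auto
  then show ?thesis
    by simp
qed

lemma std_normal_cdf_sq_antideriv_minus:
  "std_normal_cdf_sq_antideriv z + std_normal_cdf_sq_antideriv (- z)
     = z * (2 * std_normal_cdf z - 1) + 2 * std_normal_density z - 1 / sqrt pi"
  unfolding std_normal_cdf_sq_antideriv_def
  by (simp add: std_normal_cdf_minus power2_eq_square algebra_simps diff_divide_distrib)

lemma nn_integral_FTC_atLeastLessThan:
  fixes f F :: "real \<Rightarrow> real"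
  assumes "a \<le> b" and F: "\<And>x. (F has_real_derivative f x) (at x)" and "\<And>x. 0 \<le> f x"
  shows "(\<integral>\<^sup>+x. ennreal (f x) * indicator {a..<b} x \<partial>lborel) = ennreal (F b - F a)"
proof -
  have "(f has_integral F b - F a) {a..b}"
    using assms
    by (intro fundamental_theorem_of_calculus)
       (auto intro: DERIV_subset simp flip: has_real_derivative_iff_has_vector_derivative)
  then have "(f has_integral F b - F a) {a..<b}"
    by (rule has_integral_spike_set_eq[THEN iffD1, rotated 2])
       (rule negligible_subset[of "{b}"]; force)+
  then show ?thesis
    using assms(3) by (rule nn_integral_has_integral_lebesgue'[rotated])
qed

lemma crps_indicator_atLeast:
  fixes F P Q :: "real \<Rightarrow> real"
  assumes F [measurable]: "F \<in> borel_measurable borel"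
    and P: "\<And>u. (P has_real_derivative (F u)\<^sup>2) (at u)"
    and Q: "\<And>u. (Q has_real_derivative (1 - F u)\<^sup>2) (at u)"
    and Q_at_top: "(Q \<longlongrightarrow> 0) at_top"
  shows "crps (density lborel (indicator {t..})) F y = P (max y t) - P t - Q (max y t)"
proof -
  define s where "s = max y t"
  have "t \<le> s"
    by (simp add: s_def)
  have P_nondecreasing: "P a \<le> P b" if "a \<le> b" for a b
    by (rule DERIV_nonneg_imp_nondecreasing[OF that]) (metis P zero_le_power2)
  have Q_nondecreasing: "Q a \<le> Q b" if "a \<le> b" for a b
    by (rule DERIV_nonneg_imp_nondecreasing[OF that]) (metis Q zero_le_power2)
  have Q_nonpos: "Q s \<le> 0"
    by (rule tendsto_lowerbound[OF Q_at_top])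
       (auto simp: eventually_at_top_linorder intro: Q_nondecreasing)
  have left: "(\<integral>\<^sup>+u. ennreal ((F u)\<^sup>2) * indicator {t..<s} u \<partial>lborel) = ennreal (P s - P t)"
    using \<open>t \<le> s\<close> P by (rule nn_integral_FTC_atLeastLessThan) simp
  have right: "(\<integral>\<^sup>+u. ennreal ((1 - F u)\<^sup>2) * indicator {s..} u \<partial>lborel) = ennreal (0 - Q s)"
    by (rule nn_integral_FTC_atLeast[OF _ Q _ Q_at_top]) auto
  have split: "indicator {t..} u * ennreal ((F u - indicator {y..} u)\<^sup>2)
      = ennreal ((F u)\<^sup>2) * indicator {t..<s} u + ennreal ((1 - F u)\<^sup>2) * indicator {s..} u" for u
    by (simp add: s_def indicator_def power2_commute max_def)
  have "crps (density lborel (indicator {t..})) F y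
      = enn2real (\<integral>\<^sup>+u. ennreal ((F u - indicator {y..} u)\<^sup>2) \<partial>density lborel (indicator {t..}))"
    unfolding crps_def by (rule integral_eq_nn_integral) auto
  also have "\<dots> = enn2real (\<integral>\<^sup>+u. indicator {t..} u * ennreal ((F u - indicator {y..} u)\<^sup>2) \<partial>lborel)"
    by (subst nn_integral_density) auto
  also have "\<dots> = enn2real (ennreal (P s - P t) + ennreal (0 - Q s))"
    unfolding split by (subst nn_integral_add) (auto simp: left right)
  also have "\<dots> = P s - P t - Q s"
    using P_nondecreasing[OF \<open>t \<le> s\<close>] Q_nonpos by (simp flip: ennreal_plus)
  finally show ?thesis
    by (simp add: s_def)
qed

lemma crps_gauss_cdf_indicator_atLeast:
  fixes \<mu> \<sigma> t y :: real
  assumes "\<sigma> > 0"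
  shows "crps (density lborel (indicator {t..})) (gauss_cdf \<mu> \<sigma>) y =
           (let tt = (t - \<mu>) / \<sigma>; yt = (max y t - \<mu>) / \<sigma> in
            \<sigma> * ( - tt * (std_normal_cdf tt)^2
                  + yt * (2 * std_normal_cdf yt - 1)
                  + (2 * std_normal_density yt - 2 * std_normal_density tt * std_normal_cdf tt)
                  - 1 / sqrt pi * (1 - std_normal_cdf (tt * sqrt 2))))"
proof -
  let ?H = std_normal_cdf_sq_antideriv
  define tt where "tt = (t - \<mu>) / \<sigma>"
  define yt where "yt = (max y t - \<mu>) / \<sigma>"
  let ?z = "\<lambda>u. (u - \<mu>) / \<sigma>"
  have "crps (density lborel (indicator {t..})) (\<lambda>u. std_normal_cdf (?z u)) y
      = \<sigma> * ?H (?z (max y t)) - \<sigma> * ?H (?z t) - - \<sigma> * ?H (- ?z (max y t))"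
  proof (rule crps_indicator_atLeast)
    show "((\<lambda>u. \<sigma> * ?H (?z u)) has_real_derivative (std_normal_cdf (?z u))\<^sup>2) (at u)" for u
      using assms by (auto intro!: derivative_eq_intros)
    show "((\<lambda>u. - \<sigma> * ?H (- ?z u)) has_real_derivative (1 - std_normal_cdf (?z u))\<^sup>2) (at u)" for u
      using assms by (auto intro!: derivative_eq_intros simp flip: std_normal_cdf_minus)
    have "filterlim (\<lambda>u. - ?z u) at_bot at_top"
      using assms by real_asymp
    then show "((\<lambda>u. - \<sigma> * ?H (- ?z u)) \<longlongrightarrow> 0) at_top"
      using tendsto_mult_right_zero filterlim_compose[OF std_normal_cdf_sq_antideriv_at_bot] by blast
  qed simp
  then have "crps (density lborel (indicator {t..})) (gauss_cdf \<mu> \<sigma>) y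
      = \<sigma> * ((?H yt + ?H (- yt)) - ?H tt)"
    using assms by (simp add: gauss_cdf_eq_std_normal_cdf tt_def yt_def algebra_simps)
  also have "\<dots> = \<sigma> * (yt * (2 * std_normal_cdf yt - 1) + 2 * std_normal_density yt - 1 / sqrt pi - ?H tt)"
    by (simp only: std_normal_cdf_sq_antideriv_minus)
  finally show ?thesis
    unfolding Let_def tt_def[symmetric] yt_def[symmetric] std_normal_cdf_sq_antideriv_def
    by (simp add: algebra_simps diff_divide_distrib)
qed

lemma normal_density_exp:
  "s > 0 \<Longrightarrow> normal_density m s x = exp (- (x - m)\<^sup>2 / (2 * s\<^sup>2)) / (sqrt (2 * pi) * s)"
  unfolding normal_density_def by (simp add: real_sqrt_mult)

lemma borel_measurable_normal_density_compose [measurable]: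
  fixes f g :: "'a \<Rightarrow> real"
  assumes [measurable]: "f \<in> borel_measurable M" "g \<in> borel_measurable M"
  shows "(\<lambda>x. normal_density (f x) s (g x)) \<in> borel_measurable M"
  unfolding normal_density_def by measurable

lemma normal_density_reflect: "normal_density m s (c - z) = normal_density (c - m) s z"
  unfolding normal_density_def by (simp add: power2_commute algebra_simps)

lemma nn_integral_normal_density_atLeast:
  assumes "s > 0"
  shows "(\<integral>\<^sup>+u. ennreal (normal_density m s u) * indicator {c..} u \<partial>lborel)
           = ennreal (std_normal_cdf ((m - c) / s))"
proof -
  have "(\<integral>\<^sup>+u. ennreal (normal_density m s u) * indicator {c..} u \<partial>lborel)
      = (\<integral>\<^sup>+z. ennreal (normal_density m s (c - z)) * indicator {c..} (c - z) \<partial>lborel)"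
    by (subst nn_integral_real_affine[where c = "-1" and t = c]) auto
  also have "\<dots> = (\<integral>\<^sup>+z. ennreal (normal_density (c - m) s z) * indicator {..0} z \<partial>lborel)"
    by (simp add: normal_density_reflect indicator_def)
  finally show ?thesis
    using assms by (simp add: nn_integral_normal_density_atMost)
qed

lemma integral_normal_density_atLeast:
  assumes "s > 0"
  shows "(\<integral>u. normal_density m s u * indicator {c..} u \<partial>lborel) = std_normal_cdf ((m - c) / s)"
  using assms
  by (subst integral_eq_nn_integral)
     (auto simp: ennreal_mult' ennreal_indicator nn_integral_normal_density_atLeast std_normal_cdf_nonneg)

lemma bivariate_normal_density_factor:
  assumes a: "a > 0" and b: "b > 0"
  shows "bivariate_normal_density (m1, m2) (a\<^sup>2 + b\<^sup>2, a\<^sup>2, a\<^sup>2) (z1, z2) =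
         normal_density m2 a z2 * normal_density (m1 - m2 + z2) b z1"
proof -
  have det: "sqrt ((a\<^sup>2 + b\<^sup>2) * a\<^sup>2 - (a\<^sup>2)\<^sup>2) = a * b"
    using a b by (simp add: algebra_simps power2_eq_square real_sqrt_mult)
  define X where "X = - (z2 - m2)\<^sup>2 / (2 * a\<^sup>2)"
  define Y where "Y = - (z1 - (m1 - m2 + z2))\<^sup>2 / (2 * b\<^sup>2)"
  have "- ((a\<^sup>2 * (z1 - m1)\<^sup>2 - 2 * a\<^sup>2 * (z1 - m1) * (z2 - m2) + (a\<^sup>2 + b\<^sup>2) * (z2 - m2)\<^sup>2)
          / ((a\<^sup>2 + b\<^sup>2) * a\<^sup>2 - (a\<^sup>2)\<^sup>2)) / 2 = X + Y"
    unfolding X_def Y_def using a b by (simp add: field_simps power2_eq_square)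
  then have "bivariate_normal_density (m1, m2) (a\<^sup>2 + b\<^sup>2, a\<^sup>2, a\<^sup>2) (z1, z2)
      = exp X * exp Y / (2 * pi * (a * b))"
    unfolding bivariate_normal_density_def Let_def prod.case det by (simp add: exp_add)
  also have "\<dots> = exp X / (sqrt (2 * pi) * a) * (exp Y / (sqrt (2 * pi) * b))"
    using a b by (simp add: field_simps)
  finally show ?thesis
    using a b by (simp add: normal_density_exp X_def Y_def)
qed

lemma borel_measurable_bivariate_normal_density [measurable]:
  "bivariate_normal_density m S \<in> borel_measurable (lborel \<Otimes>\<^sub>M lborel)"
  unfolding bivariate_normal_density_def Let_def by measurable

lemma integral_normal_density_std_normal_cdf_atLeast:
  fixes \<mu> t y a b :: real
  assumes a: "a > 0" and b: "b > 0"
  shows "(\<integral>u. normal_density t a u * std_normal_cdf ((u - \<mu>) / b) * indicator {y..} u \<partial>lborel)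
           = bivariate_normal_cdf (0, 0) (\<mu> - t, y - t) (a\<^sup>2 + b\<^sup>2, a\<^sup>2, a\<^sup>2)"
proof -
  let ?M = "density (lborel \<Otimes>\<^sub>M lborel) (bivariate_normal_density (\<mu> - t, y - t) (a\<^sup>2 + b\<^sup>2, a\<^sup>2, a\<^sup>2))"
  have "emeasure ?M ({..0} \<times> {..0})
      = (\<integral>\<^sup>+z2. \<integral>\<^sup>+z1. ennreal (normal_density (y - t) a z2 * indicator {..0} z2)
            * (ennreal (normal_density (\<mu> - y + z2) b z1) * indicator {..0} z1) \<partial>lborel \<partial>lborel)"
    by (simp add: emeasure_density lborel_pair.nn_integral_snd[symmetric] bivariate_normal_density_factor[OF a b])
       (auto intro!: nn_integral_cong simp: indicator_def ennreal_mult')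
  also have "\<dots> = (\<integral>\<^sup>+z2. ennreal (normal_density (y - t) a z2 * indicator {..0} z2
                               * std_normal_cdf ((y - \<mu> - z2) / b)) \<partial>lborel)"
    using b by (simp add: nn_integral_cmult nn_integral_normal_density_atMost ennreal_mult'
                          std_normal_cdf_nonneg)
  also have "\<dots> = (\<integral>\<^sup>+u. ennreal (normal_density t a u * std_normal_cdf ((u - \<mu>) / b) * indicator {y..} u) \<partial>lborel)"
    by (subst nn_integral_real_affine[where c = "-1" and t = y])
       (auto intro!: nn_integral_cong simp: normal_density_reflect indicator_def)
  finally show ?thesis
    unfolding bivariate_normal_cdf_def measure_def fst_conv snd_conv
    by (subst integral_eq_nn_integral) (auto simp: std_normal_cdf_nonneg)
qed

lemma bivariate_mixture_exponent:
  fixes A B :: real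
  assumes "A > 0" "B > 0"
  shows "- v\<^sup>2 / (2 * A) + - (z1 - (m + v))\<^sup>2 / (2 * B) + - (z2 - (m + v))\<^sup>2 / (2 * B) =
      - (((A + B) * (z1 - m)\<^sup>2 - 2 * A * (z1 - m) * (z2 - m) + (A + B) * (z2 - m)\<^sup>2)
          / ((A + B) * (A + B) - A\<^sup>2)) / 2
      + - (v - A * (z1 + z2 - 2 * m) / (2 * A + B))\<^sup>2 / (2 * (A * B / (2 * A + B)))"
proof -
  define D where "D = 2 * A + B"
  have D: "D > 0"
    using assms unfolding D_def by auto
  have det: "(A + B) * (A + B) - A\<^sup>2 = B * D"
    unfolding D_def by (simp add: algebra_simps power2_eq_square)
  have "(v - A * (z1 + z2 - 2 * m) / D)\<^sup>2 / (2 * (A * B / D))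
      = (D * v - A * (z1 + z2 - 2 * m))\<^sup>2 / (2 * A * B * D)"
    using assms D by (simp add: field_simps power2_eq_square)
  then show ?thesis
    unfolding det D_def[symmetric] using assms D
    by (simp add: field_simps) (simp add: D_def power2_eq_square algebra_simps)
qed

lemma normal_density_mixture_product:
  assumes a: "a > 0" and b: "b > 0"
  defines "e \<equiv> sqrt (2 * a\<^sup>2 + b\<^sup>2)"
  shows "normal_density 0 a v * normal_density (m + v) b z1 * normal_density (m + v) b z2 =
         bivariate_normal_density (m, m) (a\<^sup>2 + b\<^sup>2, a\<^sup>2, a\<^sup>2 + b\<^sup>2) (z1, z2) *
         normal_density (a\<^sup>2 * (z1 + z2 - 2 * m) / e\<^sup>2) (a * b / e) v"
proof -
  have e: "e > 0" "e\<^sup>2 = 2 * a\<^sup>2 + b\<^sup>2"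
    unfolding e_def using a b by (auto intro: add_pos_nonneg)
  have det: "sqrt ((a\<^sup>2 + b\<^sup>2) * (a\<^sup>2 + b\<^sup>2) - (a\<^sup>2)\<^sup>2) = b * e"
  proof -
    have "(a\<^sup>2 + b\<^sup>2) * (a\<^sup>2 + b\<^sup>2) - (a\<^sup>2)\<^sup>2 = (b * e)\<^sup>2"
      using e by (simp add: algebra_simps power2_eq_square)
    then show ?thesis
      using e b by simp
  qed
  define Q where "Q = - (((a\<^sup>2 + b\<^sup>2) * (z1 - m)\<^sup>2 - 2 * a\<^sup>2 * (z1 - m) * (z2 - m)
                        + (a\<^sup>2 + b\<^sup>2) * (z2 - m)\<^sup>2) / ((a\<^sup>2 + b\<^sup>2) * (a\<^sup>2 + b\<^sup>2) - (a\<^sup>2)\<^sup>2)) / 2"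
  define K where "K = - (v - a\<^sup>2 * (z1 + z2 - 2 * m) / e\<^sup>2)\<^sup>2 / (2 * (a * b / e)\<^sup>2)"
  define X1 where "X1 = - v\<^sup>2 / (2 * a\<^sup>2)"
  define X2 where "X2 = - (z1 - (m + v))\<^sup>2 / (2 * b\<^sup>2)"
  define X3 where "X3 = - (z2 - (m + v))\<^sup>2 / (2 * b\<^sup>2)"
  have "(a * b / e)\<^sup>2 = a\<^sup>2 * b\<^sup>2 / (2 * a\<^sup>2 + b\<^sup>2)"
    using e by (simp add: power_divide power_mult_distrib)
  then have "X1 + X2 + X3 = Q + K"
    unfolding X1_def X2_def X3_def Q_def K_def e(2)
    using bivariate_mixture_exponent[of "a\<^sup>2" "b\<^sup>2" v z1 m z2] a b by simp
  then have exps: "exp X1 * exp X2 * exp X3 = exp Q * exp K"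
    by (simp flip: exp_add)
  have "normal_density 0 a v * normal_density (m + v) b z1 * normal_density (m + v) b z2
      = exp X1 * exp X2 * exp X3 / (sqrt (2 * pi) * sqrt (2 * pi) * sqrt (2 * pi) * a * b * b)"
    using a b by (simp add: normal_density_exp X1_def X2_def X3_def)
  also have "\<dots> = exp Q / (2 * pi * (b * e)) * (exp K / (sqrt (2 * pi) * (a * b / e)))"
    unfolding exps using a b e by (simp add: field_simps)
  also have "\<dots> = bivariate_normal_density (m, m) (a\<^sup>2 + b\<^sup>2, a\<^sup>2, a\<^sup>2 + b\<^sup>2) (z1, z2) *
                   normal_density (a\<^sup>2 * (z1 + z2 - 2 * m) / e\<^sup>2) (a * b / e) v"
    unfolding bivariate_normal_density_def Let_def prod.case det
    using a b e by (simp add: normal_density_exp Q_def K_def)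
  finally show ?thesis .
qed

text \<open>The bivariate law is that of \<open>(m + V + E\<^sub>1, m + V + E\<^sub>2)\<close> with independent
  \<open>V \<sim> N(0, a\<^sup>2)\<close> and \<open>E\<^sub>1, E\<^sub>2 \<sim> N(0, b\<^sup>2)\<close>.\<close>
lemma bivariate_normal_density_mixture:
  assumes a: "a > 0" and b: "b > 0"
  shows "ennreal (bivariate_normal_density (m, m) (a\<^sup>2 + b\<^sup>2, a\<^sup>2, a\<^sup>2 + b\<^sup>2) (z1, z2))
           = (\<integral>\<^sup>+v. ennreal (normal_density 0 a v * normal_density (m + v) b z1
                                   * normal_density (m + v) b z2) \<partial>lborel)"
proof -
  define e where "e = sqrt (2 * a\<^sup>2 + b\<^sup>2)"
  have "e > 0"
    unfolding e_def using a b by (auto intro: add_pos_nonneg)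
  moreover have "(\<integral>\<^sup>+v. ennreal (normal_density c s v) \<partial>lborel) = 1" if "s > 0" for c s
    using that by (subst nn_integral_eq_integral) auto
  ultimately show ?thesis
    unfolding normal_density_mixture_product[OF a b] e_def[symmetric] using a b
    by (simp add: ennreal_mult'' nn_integral_cmult)
qed

lemma nn_integral_normal_density_pair_quadrant:
  assumes "s > 0"
  shows "(\<integral>\<^sup>+p. ennreal (normal_density m s (fst p) * normal_density m s (snd p))
              * indicator ({..0} \<times> {..0}) p \<partial>(lborel \<Otimes>\<^sub>M lborel))
           = ennreal ((std_normal_cdf (- m / s))\<^sup>2)"
proof -
  let ?c = "ennreal (std_normal_cdf (- m / s))"
  have "(\<integral>\<^sup>+p. ennreal (normal_density m s (fst p) * normal_density m s (snd p))
              * indicator ({..0} \<times> {..0}) p \<partial>(lborel \<Otimes>\<^sub>M lborel))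
      = (\<integral>\<^sup>+z1. \<integral>\<^sup>+z2. (ennreal (normal_density m s z1) * indicator {..0} z1)
              * (ennreal (normal_density m s z2) * indicator {..0} z2) \<partial>lborel \<partial>lborel)"
    by (simp add: lborel.nn_integral_fst[symmetric])
       (auto intro!: nn_integral_cong simp: indicator_def ennreal_mult')
  also have "\<dots> = (\<integral>\<^sup>+z1. (ennreal (normal_density m s z1) * indicator {..0} z1) * ?c \<partial>lborel)"
    using assms by (simp add: nn_integral_cmult nn_integral_normal_density_atMost)
  also have "\<dots> = ?c * ?c"
    using assms by (simp add: nn_integral_multc nn_integral_normal_density_atMost)
  finally show ?thesis
    by (simp add: power2_eq_square ennreal_mult' std_normal_cdf_nonneg)
qed

lemma integral_normal_density_std_normal_cdf_sq:
  fixes \<mu> t a b :: real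
  assumes a: "a > 0" and b: "b > 0"
  shows "(\<integral>u. normal_density t a u * (std_normal_cdf ((u - \<mu>) / b))\<^sup>2 \<partial>lborel)
           = bivariate_normal_cdf (0, 0) (\<mu> - t, \<mu> - t) (a\<^sup>2 + b\<^sup>2, a\<^sup>2, a\<^sup>2 + b\<^sup>2)"
proof -
  define m where "m = \<mu> - t"
  define k where "k p v = normal_density 0 a v * (normal_density (m + v) b (fst p) * normal_density (m + v) b (snd p))"
    for p :: "real \<times> real" and v
  have [measurable]: "case_prod k \<in> borel_measurable ((lborel \<Otimes>\<^sub>M lborel) \<Otimes>\<^sub>M lborel)"
    unfolding k_def by measurable
  interpret pair_sigma_finite "lborel \<Otimes>\<^sub>M lborel :: (real \<times> real) measure" "lborel :: real measure"
    by (simp add: pair_sigma_finite_def sigma_finite_pair_measure sigma_finite_lborel)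
  let ?Q = "{..0::real} \<times> {..0::real}"
  have fiber: "(\<integral>\<^sup>+p. ennreal (k p v) * indicator ?Q p \<partial>(lborel \<Otimes>\<^sub>M lborel))
      = ennreal (normal_density 0 a v) * ennreal ((std_normal_cdf (- (m + v) / b))\<^sup>2)" for v
    unfolding k_def
    by (subst ennreal_mult'[of "normal_density 0 a v"])
       (simp_all add: mult.assoc nn_integral_cmult nn_integral_normal_density_pair_quadrant[OF b])
  have "emeasure (density (lborel \<Otimes>\<^sub>M lborel)
            (bivariate_normal_density (m, m) (a\<^sup>2 + b\<^sup>2, a\<^sup>2, a\<^sup>2 + b\<^sup>2))) ?Q
      = (\<integral>\<^sup>+p. \<integral>\<^sup>+v. ennreal (k p v) * indicator ?Q p \<partial>lborel \<partial>(lborel \<Otimes>\<^sub>M lborel))"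
    by (auto simp: emeasure_density k_def bivariate_normal_density_mixture[OF a b] mult.assoc
             intro!: nn_integral_cong nn_integral_multc[symmetric])
  also have "\<dots> = (\<integral>\<^sup>+v. \<integral>\<^sup>+p. ennreal (k p v) * indicator ?Q p \<partial>(lborel \<Otimes>\<^sub>M lborel) \<partial>lborel)"
    by (rule Fubini'[symmetric]) measurable
  also have "\<dots> = (\<integral>\<^sup>+v. ennreal (normal_density 0 a v) * ennreal ((std_normal_cdf (- (m + v) / b))\<^sup>2) \<partial>lborel)"
    by (simp add: fiber)
  also have "\<dots> = (\<integral>\<^sup>+u. ennreal (normal_density t a u * (std_normal_cdf ((u - \<mu>) / b))\<^sup>2) \<partial>lborel)"
    by (subst nn_integral_real_affine[where c = "-1" and t = t])
       (auto simp: normal_density_reflect m_def ennreal_mult')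
  finally show ?thesis
    unfolding bivariate_normal_cdf_def measure_def fst_conv snd_conv m_def
    by (subst integral_eq_nn_integral) auto
qed

lemma crps_density_expand:
  fixes w F :: "real \<Rightarrow> real"
  assumes w: "integrable lborel w" "\<And>u. 0 \<le> w u"
    and F [measurable]: "F \<in> borel_measurable borel"
    and F_bounds: "\<And>u. 0 \<le> F u" "\<And>u. F u \<le> 1"
  shows "crps (density lborel (\<lambda>u. ennreal (w u))) F y =
           (\<integral>u. w u * (F u)\<^sup>2 \<partial>lborel) - 2 * (\<integral>u. w u * F u * indicator {y..} u \<partial>lborel)
           + (\<integral>u. w u * indicator {y..} u \<partial>lborel)"
proof -
  have [measurable]: "w \<in> borel_measurable borel"
    using borel_measurable_integrable[OF w(1)] by simp
  have dominated: "integrable lborel g" if [measurable]: "g \<in> borel_measurable borel"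
    and "\<And>u. \<bar>g u\<bar> \<le> w u" for g
    by (rule Bochner_Integration.integrable_bound[OF w(1)]) (use that w(2) in auto)
  have "integrable lborel (\<lambda>u. w u * (F u)\<^sup>2)"
    using w(2) F_bounds by (intro dominated) (auto simp: abs_mult intro!: mult_left_le power_le_one)
  moreover have "integrable lborel (\<lambda>u. w u * F u * indicator {y..} u)"
    using w(2) F_bounds by (intro dominated) (auto simp: abs_mult indicator_def intro!: mult_left_le)
  moreover have "integrable lborel (\<lambda>u. w u * indicator {y..} u)"
    using w(2) by (intro dominated) (auto simp: abs_mult indicator_def)
  moreover have "w u * (F u - indicator {y..} u)\<^sup>2
      = w u * (F u)\<^sup>2 - 2 * (w u * F u * indicator {y..} u) + w u * indicator {y..} u" for u
    by (simp add: indicator_def power2_eq_square algebra_simps)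
  ultimately show ?thesis
    unfolding crps_def using w(2) by (subst integral_density) auto
qed

lemma crps_gauss_cdf_normal_weight:
  fixes \<mu> \<sigma> t y \<sigma>\<gamma> :: real
  assumes "\<sigma> > 0" "\<sigma>\<gamma> > 0"
  shows "crps (density lborel (\<lambda>u. 1 / \<sigma>\<gamma> * std_normal_density ((u - t) / \<sigma>\<gamma>)))
              (gauss_cdf \<mu> \<sigma>) y =
           bivariate_normal_cdf (0, 0) (\<mu> - t, \<mu> - t) (\<sigma>\<gamma>^2 + \<sigma>^2, \<sigma>\<gamma>^2, \<sigma>\<gamma>^2 + \<sigma>^2)
           - 2 * bivariate_normal_cdf (0, 0) (\<mu> - t, y - t) (\<sigma>\<gamma>^2 + \<sigma>^2, \<sigma>\<gamma>^2, \<sigma>\<gamma>^2)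
           + std_normal_cdf ((t - y) / \<sigma>\<gamma>)"
proof -
  have weight: "1 / \<sigma>\<gamma> * std_normal_density ((u - t) / \<sigma>\<gamma>) = normal_density t \<sigma>\<gamma> u" for u
    using normal_density_standardize[OF assms(2), of t "(u - t) / \<sigma>\<gamma>"] assms by (simp add: field_simps)
  show ?thesis
    unfolding weight gauss_cdf_eq_std_normal_cdf[OF assms(1)]
    using assms
    by (subst crps_density_expand)
       (simp_all add: std_normal_cdf_nonneg std_normal_cdf_le_1 integral_normal_density_std_normal_cdf_sq
                      integral_normal_density_std_normal_cdf_atLeast integral_normal_density_atLeast)
qed

theorem theorem1:
  fixes \<mu> \<sigma> t y \<sigma>\<gamma> :: real
  assumes "\<sigma> > 0"
  shows "(crps (density lborel (\<lambda>u. indicator {t..} u)) (gauss_cdf \<mu> \<sigma>) y =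
           (let tt = (t - \<mu>) / \<sigma>; yt = (max y t - \<mu>) / \<sigma> in
            \<sigma> * ( - tt * (std_normal_cdf tt)^2
                  + yt * (2 * std_normal_cdf yt - 1)
                  + (2 * std_normal_density yt - 2 * std_normal_density tt * std_normal_cdf tt)
                  - 1 / sqrt pi * (1 - std_normal_cdf (tt * sqrt 2)))))
    \<and> (\<sigma>\<gamma> > 0 \<longrightarrow>
         crps (density lborel (\<lambda>u. 1 / \<sigma>\<gamma> * std_normal_density ((u - t) / \<sigma>\<gamma>)))
              (gauss_cdf \<mu> \<sigma>) y =
           bivariate_normal_cdf (0, 0) (\<mu> - t, \<mu> - t) (\<sigma>\<gamma>^2 + \<sigma>^2, \<sigma>\<gamma>^2, \<sigma>\<gamma>^2 + \<sigma>^2)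
           - 2 * bivariate_normal_cdf (0, 0) (\<mu> - t, y - t) (\<sigma>\<gamma>^2 + \<sigma>^2, \<sigma>\<gamma>^2, \<sigma>\<gamma>^2)
           + std_normal_cdf ((t - y) / \<sigma>\<gamma>))"
  using crps_gauss_cdf_indicator_atLeast[OF assms] crps_gauss_cdf_normal_weight[OF assms] by blast

end
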